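(* Let $X$ be a locally path connected and semilocally simply connected space. Equip $\mathcal P X$ with the compact-open topology and $\Pi_1(X)$ with the CO' topology. Then the quotient map $q\colon\mathcal P X\to\Pi_1(X)$, $\gamma\mapsto[\gamma]$, is an open map.
   Context: $\mathcal P X=C([0,1],X)$ is the set of paths in $X$; $[\gamma]$ is the endpoint-fixing path-homotopy class of $\gamma$; $\Pi_1(X)$ is the set of such classes. A subset $V\subseteq X$ is relatively inessential if for $x\in V$ the map $\pi_1(V,x)\to\pi_1(X,x)$ induced by inclusion is trivial; $X$ is semilocally simply connected if every point has a relatively inessential neighbourhood. The CO' topology on $\Pi_1(X)$ is the quotient topology induced by $q$ from the compact-open topology on $\mathcal P X$. *)

theory Defs
  imports "HOL-Analysis.Analysis" "HOL-Library.FuncSet"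
begin

abbreviation unit_interval :: "real topology" where
  "unit_interval \<equiv> top_of_set {0..1}"

text \<open>Paths are represented as functions
  real => 'a that are continuous on [0,1] and normalised (undefined) outside [0,1],
  so that every element of C([0,1],X) has exactly one representative.\<close>
definition path_space :: "'a topology \<Rightarrow> (real \<Rightarrow> 'a) set" where
  "path_space X = {g. continuous_map unit_interval X g \<and> g \<in> extensional {0..1}}"

text \<open>Compact-open topology on PX: generated by the subbasis
  {g in PX. g ` K \<subseteq> U} with K compact in [0,1], U open in X.
  (K = {} yields PX itself, so the topspace is PX.)\<close>
definition compact_open_paths :: "'a topology \<Rightarrow> (real \<Rightarrow> 'a) topology" where
  "compact_open_paths X = topology_generated_by
     {{g \<in> path_space X. g ` K \<subseteq> U} | K U. K \<subseteq> {0..1} \<and> compact K \<and> openin X U}"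

definition path_homotopic :: "'a topology \<Rightarrow> (real \<Rightarrow> 'a) \<Rightarrow> (real \<Rightarrow> 'a) \<Rightarrow> bool" where
  "path_homotopic X g h \<longleftrightarrow>
     homotopic_with (\<lambda>k. k 0 = g 0 \<and> k 1 = g 1) unit_interval X g h"

definition path_class :: "'a topology \<Rightarrow> (real \<Rightarrow> 'a) \<Rightarrow> (real \<Rightarrow> 'a) set" where
  "path_class X g = {h \<in> path_space X. path_homotopic X g h}"

definition fundamental_groupoid :: "'a topology \<Rightarrow> (real \<Rightarrow> 'a) set set" where
  "fundamental_groupoid X = path_class X ` path_space X"

definition quotient_topology :: "'a topology \<Rightarrow> ('a \<Rightarrow> 'b) \<Rightarrow> 'b topology" where
  "quotient_topology P f = topology (\<lambda>U. U \<subseteq> f ` topspace P \<and>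
       openin P {x \<in> topspace P. f x \<in> U})"

lemma istopology_quotient:
  "istopology (\<lambda>U. U \<subseteq> f ` topspace P \<and> openin P {x \<in> topspace P. f x \<in> U})"
proof -
  have 1: "{x \<in> topspace P. f x \<in> S \<inter> T} = {x \<in> topspace P. f x \<in> S} \<inter> {x \<in> topspace P. f x \<in> T}" for S T
    by blast
  have 2: "{x \<in> topspace P. f x \<in> \<Union>K} = \<Union>((\<lambda>U. {x \<in> topspace P. f x \<in> U}) ` K)" for K
    by blast
  show ?thesis unfolding istopology_def
  proof (rule conjI; intro allI impI)
    fix S T assume "S \<subseteq> f ` topspace P \<and> openin P {x \<in> topspace P. f x \<in> S}"
      "T \<subseteq> f ` topspace P \<and> openin P {x \<in> topspace P. f x \<in> T}"
    then show "S \<inter> T \<subseteq> f ` topspace P \<and> openin P {x \<in> topspace P. f x \<in> S \<inter> T}"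
      using openin_Int[of P "{x \<in> topspace P. f x \<in> S}" "{x \<in> topspace P. f x \<in> T}"]
      by (simp only: 1) blast
  next
    fix K assume "\<forall>U\<in>K. U \<subseteq> f ` topspace P \<and> openin P {x \<in> topspace P. f x \<in> U}"
    then show "\<Union>K \<subseteq> f ` topspace P \<and> openin P {x \<in> topspace P. f x \<in> \<Union>K}"
      by (simp only: 2) (blast intro!: openin_Union)
  qed
qed

definition CO'_topology :: "'a topology \<Rightarrow> (real \<Rightarrow> 'a) set topology" where
  "CO'_topology X = quotient_topology (compact_open_paths X) (path_class X)"

definition relatively_inessential :: "'a topology \<Rightarrow> 'a set \<Rightarrow> bool" where
  "relatively_inessential X V \<longleftrightarrow> V \<subseteq> topspace X \<and>
     (\<forall>x\<in>V. \<forall>g. continuous_map unit_interval (subtopology X V) g \<and> g 0 = x \<and> g 1 = x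
        \<longrightarrow> homotopic_with (\<lambda>k. k 0 = x \<and> k 1 = x) unit_interval X g (\<lambda>t. x))"

definition semilocally_simply_connected :: "'a topology \<Rightarrow> bool" where
  "semilocally_simply_connected X \<longleftrightarrow>
     (\<forall>x\<in>topspace X. \<exists>U V. openin X U \<and> x \<in> U \<and> U \<subseteq> V \<and> relatively_inessential X V)"

end

theory Submission
  imports Defs
begin

text \<open>
  The map \<open>q\<close> is open iff the saturation \<open>{h. [h] \<in> q ` U}\<close> of every compact-open set \<open>U\<close>
  is open. Let \<open>[h] = [g]\<close> with \<open>g \<in> U\<close>. Near the endpoints, \<open>U\<close> constrains paths only by
  open sets \<open>A \<ni> g 0\<close> and \<open>B \<ni> g 1\<close>, so \<open>U\<close> contains a reparametrisation of \<open>\<alpha> \<cdot> g \<cdot> \<beta>\<close>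
  for all paths \<open>\<alpha>\<close> in \<open>A\<close> and \<open>\<beta>\<close> in \<open>B\<close>. On the other hand, subdivide \<open>h\<close> so finely that
  each piece lies in a relatively inessential open set \<open>W\<^sub>i\<close>. A path \<open>h'\<close> compact-open close
  to \<open>h\<close> is joined to \<open>h\<close> by short rungs at the subdivision points; each square of the
  resulting ladder lies in some \<open>W\<^sub>i\<close> and therefore commutes up to homotopy, so
  \<open>h' \<simeq> \<alpha> \<cdot> h \<cdot> \<beta> \<simeq> \<alpha> \<cdot> g \<cdot> \<beta>\<close> with \<open>\<alpha>\<close> in \<open>A\<close> and \<open>\<beta>\<close> in \<open>B\<close>. Hence a whole
  neighbourhood of \<open>h\<close> lies in the saturation.
\<close>

definition join_paths :: "(real \<Rightarrow> 'a) \<Rightarrow> (real \<Rightarrow> 'a) \<Rightarrow> real \<Rightarrow> 'a" where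
  "join_paths p q = (\<lambda>t. if t \<le> 1/2 then p (2 * t) else q (2 * t - 1))"

definition reverse_path :: "(real \<Rightarrow> 'a) \<Rightarrow> real \<Rightarrow> 'a" where
  "reverse_path p = (\<lambda>t. p (1 - t))"

definition sub_path :: "real \<Rightarrow> real \<Rightarrow> (real \<Rightarrow> 'a) \<Rightarrow> real \<Rightarrow> 'a" where
  "sub_path a b p = (\<lambda>t. p (a + (b - a) * t))"

lemma join_paths_0 [simp]: "join_paths p q 0 = p 0"
  and join_paths_1 [simp]: "join_paths p q 1 = q 1"
  and reverse_path_0 [simp]: "reverse_path p 0 = p 1"
  and reverse_path_1 [simp]: "reverse_path p 1 = p 0"
  and sub_path_0 [simp]: "sub_path a b p 0 = p a"
  and sub_path_1 [simp]: "sub_path a b p 1 = p b"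
  by (simp_all add: join_paths_def reverse_path_def sub_path_def)

lemma sub_path_0_1 [simp]: "sub_path 0 1 p = p"
  by (simp add: sub_path_def)

lemma join_paths_image_subset:
  "p ` {0..1} \<subseteq> V \<Longrightarrow> q ` {0..1} \<subseteq> V \<Longrightarrow> join_paths p q ` {0..1} \<subseteq> V"
  by (auto simp: join_paths_def)

lemma reverse_path_image_subset: "p ` {0..1} \<subseteq> V \<Longrightarrow> reverse_path p ` {0..1} \<subseteq> V"
  by (auto simp: reverse_path_def)

lemma sub_path_image_subset:
  assumes "p ` {a..b} \<subseteq> V" "a \<le> b"
  shows "sub_path a b p ` {0..1} \<subseteq> V"
proof -
  have "a + (b - a) * t \<in> {a..b}" if "t \<in> {0..1}" for t
    using that assms(2) mult_left_le[of t "b - a"] by auto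
  then show ?thesis
    using assms(1) by (auto simp: sub_path_def)
qed

lemma convex_combination_in_unit_interval:
  fixes a b s :: real
  assumes "a \<in> {0..1}" "b \<in> {0..1}" "s \<in> {0..1}"
  shows "a + (b - a) * s \<in> {0..1}"
proof -
  have "(1 - s) * a \<le> 1 - s" "s * b \<le> s"
    using assms by (simp_all add: mult_left_le)
  moreover have "0 \<le> (1 - s) * a" "0 \<le> s * b"
    using assms by simp_all
  ultimately show ?thesis
    by (simp add: algebra_simps)
qed

lemma continuous_map_top_of_set_compose:
  assumes "continuous_map (top_of_set T) X f" "continuous_on S g" "g ` S \<subseteq> T"
  shows "continuous_map (top_of_set S) X (\<lambda>x. f (g x))"
  using continuous_map_compose[of "top_of_set S" "top_of_set T" g X f] assms
  by (auto simp: o_def)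

lemma continuous_map_top_of_set_cases_le:
  fixes p q :: "'b::topological_space \<Rightarrow> real"
  assumes "continuous_on S p" "continuous_on S q"
    and "continuous_map (top_of_set {x\<in>S. p x \<le> q x}) Y f"
    and "continuous_map (top_of_set {x\<in>S. q x \<le> p x}) Y g"
    and "\<And>x. x \<in> S \<Longrightarrow> p x = q x \<Longrightarrow> f x = g x"
  shows "continuous_map (top_of_set S) Y (\<lambda>x. if p x \<le> q x then f x else g x)"
  using assms by (intro continuous_map_cases_le) (auto simp: subtopology_subtopology Int_def conj_commute)

lemma pathin_reparametrize:
  assumes "pathin X p" "continuous_on {0..1} u" "u ` {0..1} \<subseteq> {0..1}"
  shows "pathin X (\<lambda>t. p (u t))"
  using assms unfolding pathin_def by (rule continuous_map_top_of_set_compose)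

lemma pathin_join_paths:
  assumes "pathin X p" "pathin X q" "p 1 = q 0"
  shows "pathin X (join_paths p q)"
  unfolding join_paths_def pathin_def
proof (rule continuous_map_top_of_set_cases_le)
  show "continuous_map (top_of_set {t \<in> {0..1}. t \<le> 1/2}) X (\<lambda>t. p (2 * t))"
    using assms(1) unfolding pathin_def
    by (rule continuous_map_top_of_set_compose) (auto intro!: continuous_intros)
  show "continuous_map (top_of_set {t \<in> {0..1}. 1/2 \<le> t}) X (\<lambda>t. q (2 * t - 1))"
    using assms(2) unfolding pathin_def
    by (rule continuous_map_top_of_set_compose) (auto intro!: continuous_intros)
  show "p (2 * t) = q (2 * t - 1)" if "t = 1/2" for t
    unfolding that using assms(3) by simp
qed (auto intro!: continuous_intros)

lemma pathin_reverse_path: "pathin X p \<Longrightarrow> pathin X (reverse_path p)"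
  unfolding reverse_path_def by (rule pathin_reparametrize) (auto intro!: continuous_intros)

lemma pathin_sub_path:
  "pathin X p \<Longrightarrow> a \<in> {0..1} \<Longrightarrow> b \<in> {0..1} \<Longrightarrow> pathin X (sub_path a b p)"
  unfolding sub_path_def
  by (rule pathin_reparametrize) (auto intro!: continuous_intros convex_combination_in_unit_interval)

lemma pathin_in_topspace: "pathin X p \<Longrightarrow> t \<in> {0..1} \<Longrightarrow> p t \<in> topspace X"
  unfolding pathin_def using continuous_map_image_subset_topspace by fastforce

lemma path_space_imp_pathin: "g \<in> path_space X \<Longrightarrow> pathin X g"
  by (simp add: path_space_def pathin_def)

lemma restrict_in_path_space: "pathin X p \<Longrightarrow> restrict p {0..1} \<in> path_space X"
  unfolding path_space_def pathin_def
  by (auto intro: continuous_map_eq)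

section \<open>The path homotopy groupoid\<close>

lemma path_homotopic_endpoints:
  assumes "path_homotopic X p q"
  shows "q 0 = p 0" "q 1 = p 1"
  using homotopic_with_imp_property[OF assms[unfolded path_homotopic_def]] by auto

lemma path_homotopic_refl: "pathin X p \<Longrightarrow> path_homotopic X p p"
  by (simp add: path_homotopic_def pathin_def)

lemma path_homotopic_sym:
  assumes "path_homotopic X p q"
  shows "path_homotopic X q p"
proof -
  have "homotopic_with (\<lambda>k. k 0 = p 0 \<and> k 1 = p 1) unit_interval X q p"
    using assms unfolding path_homotopic_def by (rule homotopic_with_symD)
  then show ?thesis
    unfolding path_homotopic_def path_homotopic_endpoints[OF assms] .
qed

lemma path_homotopic_trans [trans]:
  assumes "path_homotopic X p q" "path_homotopic X q r"
  shows "path_homotopic X p r"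
proof -
  have "homotopic_with (\<lambda>k. k 0 = p 0 \<and> k 1 = p 1) unit_interval X q r"
    using assms(2) unfolding path_homotopic_def path_homotopic_endpoints[OF assms(1)] .
  with assms(1) show ?thesis
    unfolding path_homotopic_def by (rule homotopic_with_trans)
qed

text \<open>Reparametrisations with the same endpoints are homotopic through the straight-line homotopy
  between the parameter maps; all groupoid laws except congruence follow from this.\<close>

lemma path_homotopic_reparametrize:
  assumes p: "pathin X p"
    and u: "continuous_on {0..1} u" "u ` {0..1} \<subseteq> {0..1}"
    and v: "continuous_on {0..1} v" "v ` {0..1} \<subseteq> {0..1}"
    and ends: "u 0 = v 0" "u 1 = v 1"
    and f: "\<And>t. t \<in> {0..1} \<Longrightarrow> f t = p (u t)"
    and g: "\<And>t. t \<in> {0..1} \<Longrightarrow> g t = p (v t)"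
  shows "path_homotopic X f g"
proof -
  have "homotopic_paths {0..1} u v"
    using u v ends
    by (intro homotopic_paths_linear closed_segment_subset)
       (auto simp: path_def pathstart_def pathfinish_def image_subset_iff)
  then have "homotopic_with (\<lambda>k. k 0 = p (u 0) \<and> k 1 = p (u 1)) unit_interval X (p \<circ> u) (p \<circ> v)"
    unfolding homotopic_paths_def
    by (rule homotopic_with_compose_continuous_map_left[OF _ p[unfolded pathin_def]])
       (simp add: pathstart_def pathfinish_def)
  then have "homotopic_with (\<lambda>k. k 0 = f 0 \<and> k 1 = f 1) unit_interval X (p \<circ> u) (p \<circ> v)"
    by (simp add: f)
  then show ?thesis
    unfolding path_homotopic_def by (rule homotopic_with_eq) (auto simp: f g)
qed

lemma path_homotopic_join:
  assumes "path_homotopic X p p'" "path_homotopic X q q'" "p 1 = q 0"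
  shows "path_homotopic X (join_paths p q) (join_paths p' q')"
proof -
  obtain F :: "real \<times> real \<Rightarrow> 'a" where F: "continuous_map (top_of_set ({0..1} \<times> {0..1})) X F"
    "\<And>t. F (0, t) = p t" "\<And>t. F (1, t) = p' t" "\<And>s. s \<in> {0..1} \<Longrightarrow> F (s, 0) = p 0 \<and> F (s, 1) = p 1"
    using assms(1) unfolding path_homotopic_def homotopic_with_def by auto
  obtain G :: "real \<times> real \<Rightarrow> 'a" where G: "continuous_map (top_of_set ({0..1} \<times> {0..1})) X G"
    "\<And>t. G (0, t) = q t" "\<And>t. G (1, t) = q' t" "\<And>s. s \<in> {0..1} \<Longrightarrow> G (s, 0) = q 0 \<and> G (s, 1) = q 1"
    using assms(2) unfolding path_homotopic_def homotopic_with_def by auto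
  let ?H = "\<lambda>x. if snd x \<le> 1/2 then F (fst x, 2 * snd x) else G (fst x, 2 * snd x - 1)"
  have "continuous_map (top_of_set ({0..1} \<times> {0..1})) X ?H"
  proof (rule continuous_map_top_of_set_cases_le)
    show "continuous_map (top_of_set {x \<in> {0..1} \<times> {0..1}. snd x \<le> 1/2}) X (\<lambda>x. F (fst x, 2 * snd x))"
      by (rule continuous_map_top_of_set_compose[OF F(1)]) (auto intro!: continuous_intros)
    show "continuous_map (top_of_set {x \<in> {0..1} \<times> {0..1}. 1/2 \<le> snd x}) X (\<lambda>x. G (fst x, 2 * snd x - 1))"
      by (rule continuous_map_top_of_set_compose[OF G(1)]) (auto intro!: continuous_intros)
    show "F (fst x, 2 * snd x) = G (fst x, 2 * snd x - 1)" if "x \<in> {0..1} \<times> {0..1}" "snd x = 1/2" for x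
    proof -
      have "2 * snd x = 1"
        using that(2) by simp
      then show ?thesis
        using that(1) F(4)[of "fst x"] G(4)[of "fst x"] assms(3) by auto
    qed
  qed (auto intro!: continuous_intros)
  then show ?thesis
    unfolding path_homotopic_def homotopic_with_def
    by (intro exI[of _ ?H]) (auto simp: join_paths_def F G)
qed

lemma path_homotopic_join_const_left:
  assumes "pathin X p"
  shows "path_homotopic X (join_paths (\<lambda>t. p 0) p) p"
proof (rule path_homotopic_reparametrize[OF assms, where u="\<lambda>t. max 0 (2 * t - 1)" and v=id])
  show "join_paths (\<lambda>t. p 0) p t = p (max 0 (2 * t - 1))" for t
    by (cases "t \<le> 1/2") (simp_all add: join_paths_def max_absorb1 max_absorb2)
qed (auto intro!: continuous_intros)

lemma path_homotopic_join_const_right: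
  assumes "pathin X p"
  shows "path_homotopic X (join_paths p (\<lambda>t. p 1)) p"
proof (rule path_homotopic_reparametrize[OF assms, where u="\<lambda>t. min 1 (2 * t)" and v=id])
  show "join_paths p (\<lambda>t. p 1) t = p (min 1 (2 * t))" for t
    by (cases "t \<le> 1/2") (simp_all add: join_paths_def min_absorb1 min_absorb2)
qed (auto intro!: continuous_intros)

lemma path_homotopic_reverse_join:
  assumes "pathin X p"
  shows "path_homotopic X (join_paths (reverse_path p) p) (\<lambda>t. p 1)"
  by (rule path_homotopic_reparametrize[OF assms, where u="\<lambda>t. \<bar>2 * t - 1\<bar>" and v="\<lambda>t. 1"])
     (auto simp: join_paths_def reverse_path_def intro!: continuous_intros)

lemma path_homotopic_join_assoc:
  assumes "pathin X p" "pathin X q" "pathin X r" "p 1 = q 0" "q 1 = r 0"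
  shows "path_homotopic X (join_paths (join_paths p q) r) (join_paths p (join_paths q r))"
proof (rule path_homotopic_reparametrize[where u="\<lambda>t. min (2 * t) (min (t + 1/4) ((t + 1) / 2))" and v=id])
  show "pathin X (join_paths p (join_paths q r))"
    using assms by (intro pathin_join_paths) auto
  show "join_paths (join_paths p q) r t = join_paths p (join_paths q r) (min (2 * t) (min (t + 1/4) ((t + 1) / 2)))"
    for t :: real
  proof -
    consider "t \<le> 1/4" | "1/4 < t" "t \<le> 1/2" | "1/2 < t"
      by linarith
    then show ?thesis
    proof cases
      case 3
      then show ?thesis
        by (simp add: join_paths_def min_def field_simps)
    qed (auto simp: join_paths_def min_def algebra_simps)
  qed
qed (auto simp: min_le_iff_disj intro!: continuous_intros)

lemma path_homotopic_join_sub_paths: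
  assumes p: "pathin X p" and abc: "0 \<le> a" "a \<le> b" "b \<le> c" "c \<le> 1"
  shows "path_homotopic X (join_paths (sub_path a b p) (sub_path b c p)) (sub_path a c p)"
proof (rule path_homotopic_reparametrize[OF p,
      where u="\<lambda>t. a + (b - a) * min (2 * t) 1 + (c - b) * max 0 (2 * t - 1)" and v="\<lambda>t. a + (c - a) * t"])
  have "a + (b - a) * min (2 * t) 1 + (c - b) * max 0 (2 * t - 1) \<in> {0..1}" if "t \<in> {0..1}" for t
  proof -
    have "0 \<le> (b - a) * min (2 * t) 1" "(b - a) * min (2 * t) 1 \<le> b - a"
      "0 \<le> (c - b) * max 0 (2 * t - 1)" "(c - b) * max 0 (2 * t - 1) \<le> c - b"
      using that abc by (simp_all add: mult_left_le)
    then show ?thesis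
      using abc by simp
  qed
  then show "(\<lambda>t. a + (b - a) * min (2 * t) 1 + (c - b) * max 0 (2 * t - 1)) ` {0..1} \<subseteq> {0..1}"
    by blast
  show "(\<lambda>t. a + (c - a) * t) ` {0..1} \<subseteq> {0..1}"
    using abc by (auto intro!: convex_combination_in_unit_interval)
  show "join_paths (sub_path a b p) (sub_path b c p) t
      = p (a + (b - a) * min (2 * t) 1 + (c - b) * max 0 (2 * t - 1))" for t
    by (auto simp: join_paths_def sub_path_def min_def max_def algebra_simps)
qed (auto simp: sub_path_def algebra_simps intro!: continuous_intros)

lemma path_homotopic_join_cancel_left:
  assumes paths: "pathin X a" "pathin X q" "pathin X p" "pathin X c"
    and ends: "a 1 = q 0" "p 1 = c 0"
    and hom: "path_homotopic X (join_paths a q) (join_paths p c)"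
  shows "path_homotopic X q (join_paths (join_paths (reverse_path a) p) c)"
proof -
  have a0: "p 0 = a 0"
    using path_homotopic_endpoints(1)[OF hom] by simp
  have ra: "pathin X (reverse_path a)"
    using paths(1) by (rule pathin_reverse_path)
  have "path_homotopic X q (join_paths (\<lambda>t. a 1) q)"
    using path_homotopic_sym[OF path_homotopic_join_const_left[OF paths(2)]] ends by simp
  also have "path_homotopic X \<dots> (join_paths (join_paths (reverse_path a) a) q)"
    by (rule path_homotopic_join[OF path_homotopic_sym[OF path_homotopic_reverse_join[OF paths(1)]]
          path_homotopic_refl[OF paths(2)]]) (use ends in simp)
  also have "path_homotopic X \<dots> (join_paths (reverse_path a) (join_paths a q))"
    by (rule path_homotopic_join_assoc[OF ra paths(1,2)]) (use ends in simp_all)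
  also have "path_homotopic X \<dots> (join_paths (reverse_path a) (join_paths p c))"
    by (rule path_homotopic_join[OF path_homotopic_refl[OF ra] hom]) simp
  also have "path_homotopic X \<dots> (join_paths (join_paths (reverse_path a) p) c)"
    by (rule path_homotopic_sym[OF path_homotopic_join_assoc[OF ra paths(3,4)]]) (use a0 ends in simp_all)
  finally show ?thesis .
qed

lemma path_homotopic_ladder:
  assumes p: "pathin X p" and q: "pathin X q" and n: "0 < n"
    and t: "mono t" "t 0 = 0" "t n = 1"
    and c: "\<And>i. i \<le> n \<Longrightarrow> pathin X (c i)" "\<And>i. i \<le> n \<Longrightarrow> c i 0 = p (t i)"
      "\<And>i. i \<le> n \<Longrightarrow> c i 1 = q (t i)"
    and square: "\<And>i. i < n \<Longrightarrow> path_homotopic X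
        (join_paths (c i) (sub_path (t i) (t (Suc i)) q)) (join_paths (sub_path (t i) (t (Suc i)) p) (c (Suc i)))"
  shows "path_homotopic X (join_paths (c 0) q) (join_paths p (c n))"
proof -
  have t01: "0 \<le> t i" "t i \<le> 1" if "i \<le> n" for i
    using monoD[OF t(1), of 0 i] monoD[OF t(1), of i n] t(2,3) that by auto
  have "path_homotopic X (join_paths (c 0) (sub_path 0 (t k) q)) (join_paths (sub_path 0 (t k) p) (c k))"
    if "1 \<le> k" "k \<le> n" for k
    using that
  proof (induction k rule: nat_induct_at_least)
    case base
    then show ?case
      using square[OF n] t(2) by simp
  next
    case (Suc k)
    define a b where "a = t k" and "b = t (Suc k)"
    have ab: "0 \<le> a" "a \<le> b" "b \<le> 1"
      using t01[of k] t01[of "Suc k"] monoD[OF t(1), of k "Suc k"] Suc.prems by (auto simp: a_def b_def)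
    have paths: "pathin X (sub_path 0 a p)" "pathin X (sub_path a b p)"
      "pathin X (sub_path 0 a q)" "pathin X (sub_path a b q)" "pathin X (c 0)" "pathin X (c k)" "pathin X (c (Suc k))"
      using ab c(1) Suc.prems p q by (auto intro!: pathin_sub_path)
    have ends: "c 0 1 = q 0" "c k 0 = p a" "c k 1 = q a" "c (Suc k) 0 = p b"
      using c(2,3) Suc.prems t(2) by (auto simp: a_def b_def)
    have "path_homotopic X (join_paths (c 0) (sub_path 0 b q)) (join_paths (c 0) (join_paths (sub_path 0 a q) (sub_path a b q)))"
      by (rule path_homotopic_join[OF path_homotopic_refl[OF paths(5)]
            path_homotopic_sym[OF path_homotopic_join_sub_paths[OF q]]]) (use ab ends in auto)
    also have "path_homotopic X \<dots> (join_paths (join_paths (c 0) (sub_path 0 a q)) (sub_path a b q))"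
      by (rule path_homotopic_sym[OF path_homotopic_join_assoc]) (use paths ends in auto)
    also have "path_homotopic X \<dots> (join_paths (join_paths (sub_path 0 a p) (c k)) (sub_path a b q))"
      by (rule path_homotopic_join[OF _ path_homotopic_refl[OF paths(4)]]) (use Suc in \<open>auto simp: a_def\<close>)
    also have "path_homotopic X \<dots> (join_paths (sub_path 0 a p) (join_paths (c k) (sub_path a b q)))"
      by (rule path_homotopic_join_assoc) (use paths ends in auto)
    also have "path_homotopic X \<dots> (join_paths (sub_path 0 a p) (join_paths (sub_path a b p) (c (Suc k))))"
      by (rule path_homotopic_join[OF path_homotopic_refl[OF paths(1)]])
         (use square[of k] Suc.prems ends in \<open>auto simp: a_def b_def\<close>)
    also have "path_homotopic X \<dots> (join_paths (join_paths (sub_path 0 a p) (sub_path a b p)) (c (Suc k)))"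
      by (rule path_homotopic_sym[OF path_homotopic_join_assoc]) (use paths ends in auto)
    also have "path_homotopic X \<dots> (join_paths (sub_path 0 b p) (c (Suc k)))"
      by (rule path_homotopic_join[OF path_homotopic_join_sub_paths[OF p] path_homotopic_refl[OF paths(7)]])
         (use ab ends in auto)
    finally show ?case
      by (simp add: b_def)
  qed
  from this[of n] show ?thesis
    using n t(2,3) by simp
qed

lemma relatively_inessential_subset:
  assumes "relatively_inessential X V" "W \<subseteq> V"
  shows "relatively_inessential X W"
  unfolding relatively_inessential_def
proof (intro conjI ballI allI impI)
  show "W \<subseteq> topspace X"
    using assms unfolding relatively_inessential_def by blast
  fix x g
  assume "x \<in> W" and g: "continuous_map unit_interval (subtopology X W) g \<and> g 0 = x \<and> g 1 = x"
  moreover have "continuous_map unit_interval (subtopology X V) g"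
    using g assms(2) by (auto simp: continuous_map_in_subtopology)
  ultimately show "homotopic_with (\<lambda>k. k 0 = x \<and> k 1 = x) unit_interval X g (\<lambda>t. x)"
    using assms unfolding relatively_inessential_def by blast
qed

lemma semilocally_simply_connected_nbhd:
  assumes "semilocally_simply_connected X" "x \<in> topspace X"
  obtains U where "openin X U" "x \<in> U" "relatively_inessential X U"
proof -
  obtain U V where "openin X U" "x \<in> U" "U \<subseteq> V" "relatively_inessential X V"
    using assms unfolding semilocally_simply_connected_def by blast
  then show thesis
    using that relatively_inessential_subset by blast
qed

lemma path_homotopic_relatively_inessential:
  assumes V: "relatively_inessential X V" and p: "pathin X p" and q: "pathin X q"
    and pV: "p ` {0..1} \<subseteq> V" and qV: "q ` {0..1} \<subseteq> V"
    and ends: "p 0 = q 0" "p 1 = q 1"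
  shows "path_homotopic X p q"
proof -
  let ?loop = "join_paths p (reverse_path q)"
  have "pathin X ?loop"
    using p q ends by (intro pathin_join_paths pathin_reverse_path) auto
  moreover have "?loop ` {0..1} \<subseteq> V"
    using pV qV by (intro join_paths_image_subset reverse_path_image_subset)
  ultimately have "continuous_map unit_interval (subtopology X V) ?loop"
    by (auto simp: pathin_def continuous_map_in_subtopology)
  moreover have "p 0 \<in> V"
    using pV by auto
  ultimately have loop_null: "path_homotopic X ?loop (\<lambda>t. p 0)"
    using V ends unfolding relatively_inessential_def path_homotopic_def by auto
  have "path_homotopic X p (join_paths p (\<lambda>t. p 1))"
    by (rule path_homotopic_sym[OF path_homotopic_join_const_right[OF p]])
  also have "path_homotopic X \<dots> (join_paths p (join_paths (reverse_path q) q))"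
  proof (rule path_homotopic_join[OF path_homotopic_refl[OF p]])
    show "path_homotopic X (\<lambda>t. p 1) (join_paths (reverse_path q) q)"
      using path_homotopic_sym[OF path_homotopic_reverse_join[OF q]] ends by simp
  qed simp
  also have "path_homotopic X \<dots> (join_paths ?loop q)"
    by (rule path_homotopic_sym[OF path_homotopic_join_assoc[OF p pathin_reverse_path[OF q] q]])
       (use ends in simp_all)
  also have "path_homotopic X \<dots> (join_paths (\<lambda>t. p 0) q)"
    by (rule path_homotopic_join[OF loop_null path_homotopic_refl[OF q]]) simp
  also have "path_homotopic X \<dots> q"
    using path_homotopic_join_const_left[OF q] ends by simp
  finally show ?thesis .
qed

lemma path_homotopic_square_relatively_inessential:
  assumes W: "relatively_inessential X W" and paths: "pathin X p" "pathin X q" "pathin X c" "pathin X d"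
    and ab: "a \<in> {0..1}" "b \<in> {0..1}" "a \<le> b"
    and images: "p ` {a..b} \<subseteq> W" "q ` {a..b} \<subseteq> W" "c ` {0..1} \<subseteq> W" "d ` {0..1} \<subseteq> W"
    and ends: "c 0 = p a" "c 1 = q a" "d 0 = p b" "d 1 = q b"
  shows "path_homotopic X (join_paths c (sub_path a b q)) (join_paths (sub_path a b p) d)"
proof (rule path_homotopic_relatively_inessential[OF W])
  show "pathin X (join_paths c (sub_path a b q))" "pathin X (join_paths (sub_path a b p) d)"
    using paths ab ends by (auto intro!: pathin_join_paths pathin_sub_path)
  show "join_paths c (sub_path a b q) ` {0..1} \<subseteq> W" "join_paths (sub_path a b p) d ` {0..1} \<subseteq> W"
    using images ab by (intro join_paths_image_subset sub_path_image_subset; simp)+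
qed (use ends in simp_all)

section \<open>Neighbourhoods in the compact-open topology\<close>

lemma generate_topology_on_finite_Inter_nbhd:
  assumes "generate_topology_on \<S> N" "x \<in> N"
  obtains \<F> where "finite \<F>" "\<F> \<subseteq> \<S>" "x \<in> \<Inter>\<F>" "\<Inter>\<F> \<subseteq> N"
proof -
  have "\<exists>\<F>. finite \<F> \<and> \<F> \<subseteq> \<S> \<and> x \<in> \<Inter>\<F> \<and> \<Inter>\<F> \<subseteq> N"
    using assms
  proof (induction rule: generate_topology_on.induct)
    case (Int a b)
    then have "x \<in> a" "x \<in> b"
      by auto
    obtain \<F>\<^sub>a where "finite \<F>\<^sub>a" "\<F>\<^sub>a \<subseteq> \<S>" "x \<in> \<Inter>\<F>\<^sub>a" "\<Inter>\<F>\<^sub>a \<subseteq> a"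
      using Int.IH(1)[OF \<open>x \<in> a\<close>] by blast
    moreover obtain \<F>\<^sub>b where "finite \<F>\<^sub>b" "\<F>\<^sub>b \<subseteq> \<S>" "x \<in> \<Inter>\<F>\<^sub>b" "\<Inter>\<F>\<^sub>b \<subseteq> b"
      using Int.IH(2)[OF \<open>x \<in> b\<close>] by blast
    ultimately show ?case
      by (intro exI[of _ "\<F>\<^sub>a \<union> \<F>\<^sub>b"]) auto
  next
    case (UN K)
    then obtain k where "k \<in> K" "x \<in> k"
      by blast
    moreover obtain \<F> where "finite \<F>" "\<F> \<subseteq> \<S>" "x \<in> \<Inter>\<F>" "\<Inter>\<F> \<subseteq> k"
      using UN.IH[OF \<open>k \<in> K\<close> \<open>x \<in> k\<close>] by blast
    ultimately show ?case
      by (intro exI[of _ \<F>]) auto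
  next
    case (Basis s)
    then show ?case
      by (intro exI[of _ "{s}"]) auto
  qed simp
  then show thesis
    using that by blast
qed

lemma topspace_compact_open_paths [simp]: "topspace (compact_open_paths X) = path_space X"
proof -
  have "path_space X \<in> {{g \<in> path_space X. g ` K \<subseteq> U} | K U. K \<subseteq> {0..1} \<and> compact K \<and> openin X U}"
    by (rule CollectI, rule exI[of _ "{}"], rule exI[of _ "{}"]) auto
  then show ?thesis
    unfolding compact_open_paths_def topology_generated_by_topspace by blast
qed

lemma openin_compact_open_paths_subbasic:
  assumes "K \<subseteq> {0..1}" "compact K" "openin X U"
  shows "openin (compact_open_paths X) {g \<in> path_space X. g ` K \<subseteq> U}"
  unfolding compact_open_paths_def using assms by (intro topology_generated_by_Basis) blast

lemma compact_open_paths_nbhd: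
  assumes "openin (compact_open_paths X) N" "g \<in> N"
  obtains F where "finite F"
    "\<And>K U. (K, U) \<in> F \<Longrightarrow> K \<subseteq> {0..1} \<and> compact K \<and> openin X U \<and> g ` K \<subseteq> U"
    "{f \<in> path_space X. \<forall>(K, U) \<in> F. f ` K \<subseteq> U} \<subseteq> N"
proof -
  let ?\<S> = "{{g \<in> path_space X. g ` K \<subseteq> U} | K U. K \<subseteq> {0..1} \<and> compact K \<and> openin X U}"
  have "generate_topology_on ?\<S> N"
    using assms(1) unfolding compact_open_paths_def openin_topology_generated_by_iff .
  then obtain \<F> where \<F>: "finite \<F>" "\<F> \<subseteq> ?\<S>" "g \<in> \<Inter>\<F>" "\<Inter>\<F> \<subseteq> N"
    using assms(2) by (rule generate_topology_on_finite_Inter_nbhd)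
  have "\<forall>S\<in>\<F>. \<exists>K U. S = {f \<in> path_space X. f ` K \<subseteq> U} \<and> K \<subseteq> {0..1} \<and> compact K \<and> openin X U"
    using \<F>(2) unfolding subset_iff by simp
  then obtain K U where KU: "\<forall>S\<in>\<F>.
      S = {f \<in> path_space X. f ` K S \<subseteq> U S} \<and> K S \<subseteq> {0..1} \<and> compact (K S) \<and> openin X (U S)"
    unfolding bchoice_iff by blast
  show thesis
  proof (rule that[of "(\<lambda>S. (K S, U S)) ` \<F>"])
    show "finite ((\<lambda>S. (K S, U S)) ` \<F>)"
      using \<F>(1) by simp
    show "K' \<subseteq> {0..1} \<and> compact K' \<and> openin X U' \<and> g ` K' \<subseteq> U'"
      if KU': "(K', U') \<in> (\<lambda>S. (K S, U S)) ` \<F>" for K' U'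
    proof -
      obtain S where S: "S \<in> \<F>" "K' = K S" "U' = U S"
        using KU' by blast
      with \<F>(3) have "g \<in> S"
        by blast
      then show ?thesis
        using bspec[OF KU S(1)] S by auto
    qed
    show "{f \<in> path_space X. \<forall>(K', U') \<in> (\<lambda>S. (K S, U S)) ` \<F>. f ` K' \<subseteq> U'} \<subseteq> N"
    proof
      fix f assume "f \<in> {f \<in> path_space X. \<forall>(K', U') \<in> (\<lambda>S. (K S, U S)) ` \<F>. f ` K' \<subseteq> U'}"
      then have "f \<in> S" if "S \<in> \<F>" for S
        using bspec[OF KU that] that by auto
      then have "f \<in> \<Inter>\<F>"
        by blast
      then show "f \<in> N"
        using \<F>(4) by blast
    qed
  qed
qed

lemma eventually_at_right_0_cball_subset:
  fixes c :: "'a::metric_space"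
  assumes "open S" "c \<in> S"
  shows "\<forall>\<^sub>F e in at_right 0. cball c e \<subseteq> S"
proof -
  obtain d where "0 < d" "cball c d \<subseteq> S"
    using assms open_contains_cball by blast
  then show ?thesis
    unfolding eventually_at_right_field by (intro exI[of _ d]) (auto dest: subset_cball)
qed

lemma compact_eventually_disjoint_cball:
  fixes c :: "'a::metric_space"
  assumes "compact K"
  shows "\<forall>\<^sub>F e in at_right 0. c \<notin> K \<longrightarrow> K \<inter> cball c e = {}"
proof (cases "c \<in> K")
  case False
  then show ?thesis
    using eventually_at_right_0_cball_subset[of "- K" c] assms
    by (auto simp: compact_imp_closed open_Compl elim!: eventually_mono)
qed simp

lemma pathin_preimage_open:
  assumes "pathin X g" "openin X A"
  obtains T where "open T" "{t \<in> {0..1}. g t \<in> A} = {0..1} \<inter> T"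
proof -
  have "openin (top_of_set {0..1}) {t \<in> {0..1}. g t \<in> A}"
    using openin_continuous_map_preimage[OF assms(1)[unfolded pathin_def] assms(2)] by simp
  then show thesis
    using that by (auto simp: openin_open)
qed

lemma pathin_eventually_near:
  assumes "pathin X g" "openin X A" "c \<in> {0..1}" "g c \<in> A"
  shows "\<forall>\<^sub>F e in at_right 0. g ` ({0..1} \<inter> cball c e) \<subseteq> A"
proof -
  obtain T where T: "open T" "{t \<in> {0..1}. g t \<in> A} = {0..1} \<inter> T"
    using pathin_preimage_open[OF assms(1,2)] by blast
  moreover have "c \<in> T"
    using T(2) assms(3,4) by blast
  ultimately show ?thesis
    using eventually_at_right_0_cball_subset[of T c] by (auto elim!: eventually_mono)
qed

lemma image_subset_if_agrees_off_margins:
  fixes e :: real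
  assumes K: "K \<subseteq> {0..1}" and gK: "g ` K \<subseteq> U"
    and away0: "0 \<notin> K \<Longrightarrow> K \<inter> cball 0 e = {}" and away1: "1 \<notin> K \<Longrightarrow> K \<inter> cball 1 e = {}"
    and f0: "0 \<in> K \<Longrightarrow> f ` {0..e} \<subseteq> U" and f1: "1 \<in> K \<Longrightarrow> f ` {1-e..1} \<subseteq> U"
    and mid: "\<And>t. t \<in> {e..1-e} \<Longrightarrow> f t = g t"
  shows "f ` K \<subseteq> U"
proof (rule image_subsetI)
  fix t
  assume t: "t \<in> K"
  then have t01: "0 \<le> t" "t \<le> 1"
    using K by auto
  consider "t < e" | "1 - e < t" | "t \<in> {e..1-e}"
    by fastforce
  then show "f t \<in> U"
  proof cases
    case 1
    then have "0 \<in> K"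
      using away0 t t01 by (force simp: dist_real_def)
    then show ?thesis
      using f0 1 t01 by auto
  next
    case 2
    then have "1 \<in> K"
      using away1 t t01 by (force simp: dist_real_def)
    then show ?thesis
      using f1 2 t01 by auto
  next
    case 3
    then show ?thesis
      using mid gK t by auto
  qed
qed

lemma endpoint_margin:
  fixes \<K> :: "real set set"
  assumes \<K>: "finite \<K>" "\<And>K. K \<in> \<K> \<Longrightarrow> compact K"
    and g: "pathin X g" and A: "openin X A" "g 0 \<in> A" and B: "openin X B" "g 1 \<in> B"
  obtains e where "0 < e" "e < 1/4" "g ` {0..e} \<subseteq> A" "g ` {1-e..1} \<subseteq> B"
    "\<forall>K \<in> \<K>. (0 \<notin> K \<longrightarrow> K \<inter> cball 0 e = {}) \<and> (1 \<notin> K \<longrightarrow> K \<inter> cball 1 e = {})"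
proof -
  have avoid: "\<forall>\<^sub>F e in at_right 0. c \<notin> K \<longrightarrow> K \<inter> cball c e = {}" if "K \<in> \<K>" for K and c :: real
    using \<K>(2)[OF that] by (rule compact_eventually_disjoint_cball)
  have "\<forall>\<^sub>F e in at_right 0. e < 1/4
      \<and> g ` ({0..1} \<inter> cball 0 e) \<subseteq> A \<and> g ` ({0..1} \<inter> cball 1 e) \<subseteq> B
      \<and> (\<forall>K \<in> \<K>. (0 \<notin> K \<longrightarrow> K \<inter> cball 0 e = {}) \<and> (1 \<notin> K \<longrightarrow> K \<inter> cball 1 e = {}))"
  proof (intro eventually_conj eventually_ball_finite \<K>(1) ballI avoid)
    show "\<forall>\<^sub>F e in at_right 0. e < (1/4 :: real)"
      unfolding eventually_at_right_field by (intro exI[of _ "1/4"]) auto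
    show "\<forall>\<^sub>F e in at_right 0. g ` ({0..1} \<inter> cball 0 e) \<subseteq> A"
      by (rule pathin_eventually_near[OF g A(1)]) (use A in auto)
    show "\<forall>\<^sub>F e in at_right 0. g ` ({0..1} \<inter> cball 1 e) \<subseteq> B"
      by (rule pathin_eventually_near[OF g B(1)]) (use B in auto)
  qed
  then have "\<exists>e. 0 < e \<and> e < 1/4
      \<and> g ` ({0..1} \<inter> cball 0 e) \<subseteq> A \<and> g ` ({0..1} \<inter> cball 1 e) \<subseteq> B
      \<and> (\<forall>K \<in> \<K>. (0 \<notin> K \<longrightarrow> K \<inter> cball 0 e = {}) \<and> (1 \<notin> K \<longrightarrow> K \<inter> cball 1 e = {}))"
    by (intro eventually_happens'[OF _ eventually_conj[OF eventually_at_right_less]]) simp_all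
  then obtain e where e: "0 < e" "e < 1/4"
    and gA: "g ` ({0..1} \<inter> cball 0 e) \<subseteq> A" and gB: "g ` ({0..1} \<inter> cball 1 e) \<subseteq> B"
    and away: "\<forall>K \<in> \<K>. (0 \<notin> K \<longrightarrow> K \<inter> cball 0 e = {}) \<and> (1 \<notin> K \<longrightarrow> K \<inter> cball 1 e = {})"
    by meson
  have "{0..e} \<subseteq> {0..1} \<inter> cball 0 e" "{1-e..1} \<subseteq> {0..1} \<inter> cball 1 e"
    using e by (auto simp: dist_real_def)
  with gA gB have "g ` {0..e} \<subseteq> A" "g ` {1-e..1} \<subseteq> B"
    by blast+
  from e this away show thesis
    by (rule that)
qed

lemma compact_open_paths_nbhd_endpoint_margins:
  assumes g: "g \<in> path_space X" and N: "openin (compact_open_paths X) N" "g \<in> N"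
  obtains A B e where "openin X A" "openin X B" "0 < e" "e < 1/4"
    "g ` {0..e} \<subseteq> A" "g ` {1-e..1} \<subseteq> B"
    "\<And>f. f \<in> path_space X \<Longrightarrow> f ` {0..e} \<subseteq> A \<Longrightarrow> f ` {1-e..1} \<subseteq> B \<Longrightarrow>
        (\<And>t. t \<in> {e..1-e} \<Longrightarrow> f t = g t) \<Longrightarrow> f \<in> N"
proof -
  have pg: "pathin X g"
    using g by (rule path_space_imp_pathin)
  obtain F where F: "finite F"
    "\<And>K U. (K, U) \<in> F \<Longrightarrow> K \<subseteq> {0..1} \<and> compact K \<and> openin X U \<and> g ` K \<subseteq> U"
    "{f \<in> path_space X. \<forall>(K, U) \<in> F. f ` K \<subseteq> U} \<subseteq> N"
    by (rule compact_open_paths_nbhd[OF N]) blast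
  define A where "A = topspace X \<inter> \<Inter>(snd ` {KU \<in> F. 0 \<in> fst KU})"
  define B where "B = topspace X \<inter> \<Inter>(snd ` {KU \<in> F. 1 \<in> fst KU})"
  have A: "openin X A" "g 0 \<in> A" and B: "openin X B" "g 1 \<in> B"
    unfolding A_def B_def using F(1,2) pathin_in_topspace[OF pg]
    by (force intro!: openin_Int_Inter)+
  have AU: "A \<subseteq> U" if "(K, U) \<in> F" "0 \<in> K" for K U
    using that unfolding A_def by force
  have BU: "B \<subseteq> U" if "(K, U) \<in> F" "1 \<in> K" for K U
    using that unfolding B_def by force
  have "finite (fst ` F)" "\<And>K. K \<in> fst ` F \<Longrightarrow> compact K"
    using F(1,2) by force+
  then obtain e where e: "0 < e" "e < 1/4" "g ` {0..e} \<subseteq> A" "g ` {1-e..1} \<subseteq> B"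
    and away: "\<forall>K \<in> fst ` F. (0 \<notin> K \<longrightarrow> K \<inter> cball 0 e = {}) \<and> (1 \<notin> K \<longrightarrow> K \<inter> cball 1 e = {})"
    using pg A B by (rule endpoint_margin)
  show thesis
  proof (rule that[OF A(1) B(1) e])
    fix f
    assume f: "f \<in> path_space X" "f ` {0..e} \<subseteq> A" "f ` {1-e..1} \<subseteq> B"
      and mid: "\<And>t. t \<in> {e..1-e} \<Longrightarrow> f t = g t"
    have "f ` K \<subseteq> U" if KU: "(K, U) \<in> F" for K U
    proof (rule image_subset_if_agrees_off_margins[OF _ _ _ _ _ _ mid])
      show "K \<subseteq> {0..1}" "g ` K \<subseteq> U"
        using F(2)[OF KU] by simp_all
      show "K \<inter> cball 0 e = {}" if "0 \<notin> K"
        using away KU that by force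
      show "K \<inter> cball 1 e = {}" if "1 \<notin> K"
        using away KU that by force
      show "f ` {0..e} \<subseteq> U" if "0 \<in> K"
        using f(2) AU[OF KU that] by blast
      show "f ` {1-e..1} \<subseteq> U" if "1 \<in> K"
        using f(3) BU[OF KU that] by blast
    qed
    then show "f \<in> N"
      using F(3) f(1) by blast
  qed
qed

section \<open>Absorbing small end paths near a path\<close>

lemma join_join_paths_image_initial:
  assumes "e < 1" "0 \<le> u" "u \<le> 1/4 + e/4"
  shows "join_paths (join_paths \<alpha> g) \<beta> u \<in> \<alpha> ` {0..1} \<union> g ` {0..e}"
proof (cases "u \<le> 1/4")
  case True
  then have "join_paths (join_paths \<alpha> g) \<beta> u = \<alpha> (4 * u)"
    by (simp add: join_paths_def)
  then show ?thesis
    using True assms by auto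
next
  case False
  then have "join_paths (join_paths \<alpha> g) \<beta> u = g (4 * u - 1)"
    using assms by (simp add: join_paths_def)
  then show ?thesis
    using False assms by auto
qed

lemma join_join_paths_image_final:
  assumes "e < 1" "1/2 - e/4 \<le> u" "u \<le> 1"
  shows "join_paths (join_paths \<alpha> g) \<beta> u \<in> g ` {1-e..1} \<union> \<beta> ` {0..1}"
proof (cases "u \<le> 1/2")
  case True
  then have "join_paths (join_paths \<alpha> g) \<beta> u = g (4 * u - 1)"
    using assms by (simp add: join_paths_def)
  then show ?thesis
    using True assms by auto
next
  case False
  then have "join_paths (join_paths \<alpha> g) \<beta> u = \<beta> (2 * u - 1)"
    by (simp add: join_paths_def)
  then show ?thesis
    using False assms by auto
qed

lemma join_join_paths_middle:
  "0 < t \<Longrightarrow> t \<le> 1 \<Longrightarrow> join_paths (join_paths \<alpha> g) \<beta> (1/4 + t/4) = g t"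
  by (simp add: join_paths_def field_simps)

lemma absorbing_reparametrization:
  fixes e :: real
  assumes "0 < e" "e < 1/4"
  obtains \<phi> where "continuous_on {0..1} \<phi>" "\<phi> ` {0..1} \<subseteq> {0..1}" "\<phi> 0 = 0" "\<phi> 1 = 1"
    "\<And>t. t \<in> {e..1-e} \<Longrightarrow> \<phi> t = 1/4 + t/4"
    "\<And>t. t \<in> {0..e} \<Longrightarrow> \<phi> t \<le> 1/4 + e/4"
    "\<And>t. t \<in> {1-e..1} \<Longrightarrow> 1/2 - e/4 \<le> \<phi> t"
proof -
  \<comment> \<open>\<open>\<phi>\<close> is piecewise linear through \<open>(0,0)\<close>, \<open>(e,(1+e)/4)\<close>, \<open>(1-e,(2-e)/4)\<close> and \<open>(1,1)\<close>\<close>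
  define \<psi> where "\<psi> t = max (min (t / (4 * e)) (1/4)) (3/4 - (1 - t) / (2 * e))" for t
  have lo: "1/4 \<le> t / (4 * e) \<longleftrightarrow> e \<le> t" and hi: "1/2 \<le> (1 - t) / (2 * e) \<longleftrightarrow> e \<le> 1 - t" for t
    using assms by (auto simp: field_simps)
  have nonneg: "0 \<le> t / (4 * e)" "0 \<le> (1 - t) / (2 * e)" if "t \<in> {0..1}" for t
    using that assms by auto
  have \<psi>_left: "\<psi> t \<le> 1/4" if "t \<le> 1 - e" for t
    using hi[of t] that by (auto simp only: \<psi>_def max_def min_def split: if_splits)
  have \<psi>_right: "1/4 \<le> \<psi> t" if "e \<le> t" for t
    using lo[of t] that by (auto simp only: \<psi>_def max_def min_def split: if_splits)
  have \<psi>_range: "0 \<le> \<psi> t \<and> \<psi> t \<le> 3/4" if "t \<in> {0..1}" for t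
    using nonneg[OF that] by (auto simp only: \<psi>_def max_def min_def split: if_splits)
  have "3/4 \<le> (1 - 0) / (2 * e)" "0 / (4 * e) = 0"
    using assms by (simp_all add: field_simps)
  then have "\<psi> 0 = 0"
    by (auto simp only: \<psi>_def max_def min_def split: if_splits)
  moreover have "(1 - 1) / (2 * e) = 0"
    by simp
  then have "\<psi> 1 = 3/4"
    by (auto simp only: \<psi>_def max_def min_def split: if_splits)
  moreover have "continuous_on {0..1} (\<lambda>t. t/4 + \<psi> t)"
    unfolding \<psi>_def using assms by (intro continuous_intros) auto
  moreover have "(\<lambda>t. t/4 + \<psi> t) ` {0..1} \<subseteq> {0..1}"
    using \<psi>_range by force
  ultimately show thesis
  proof (intro that[of "\<lambda>t. t/4 + \<psi> t"])
    show "t/4 + \<psi> t = 1/4 + t/4" if "t \<in> {e..1-e}" for t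
      using \<psi>_left[of t] \<psi>_right[of t] that by auto
    show "t/4 + \<psi> t \<le> 1/4 + e/4" if "t \<in> {0..e}" for t
      using \<psi>_left[of t] that assms by auto
    show "1/2 - e/4 \<le> t/4 + \<psi> t" if "t \<in> {1-e..1}" for t
      using \<psi>_right[of t] that assms by auto
  qed auto
qed

lemma path_homotopic_absorb_end_paths:
  assumes g: "pathin X g" and e: "0 < e" "e < 1/4"
    and \<alpha>: "pathin X \<alpha>" "\<alpha> 1 = g 0" and \<beta>: "pathin X \<beta>" "\<beta> 0 = g 1"
  obtains g' where "g' \<in> path_space X" "\<And>t. t \<in> {e..1-e} \<Longrightarrow> g' t = g t"
    "g' ` {0..e} \<subseteq> \<alpha> ` {0..1} \<union> g ` {0..e}" "g' ` {1-e..1} \<subseteq> g ` {1-e..1} \<union> \<beta> ` {0..1}"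
    "path_homotopic X g' (join_paths (join_paths \<alpha> g) \<beta>)"
proof -
  obtain \<phi> where \<phi>: "continuous_on {0..1} \<phi>" "\<phi> ` {0..1} \<subseteq> {0..1}" "\<phi> 0 = 0" "\<phi> 1 = 1"
    "\<And>t. t \<in> {e..1-e} \<Longrightarrow> \<phi> t = 1/4 + t/4"
    "\<And>t. t \<in> {0..e} \<Longrightarrow> \<phi> t \<le> 1/4 + e/4"
    "\<And>t. t \<in> {1-e..1} \<Longrightarrow> 1/2 - e/4 \<le> \<phi> t"
    by (rule absorbing_reparametrization[OF e]) blast
  let ?c = "join_paths (join_paths \<alpha> g) \<beta>"
  define g' where "g' = restrict (\<lambda>t. ?c (\<phi> t)) {0..1}"
  have pc: "pathin X ?c"
    using g \<alpha> \<beta> by (intro pathin_join_paths) auto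
  have g'_eq: "g' t = ?c (\<phi> t)" "\<phi> t \<in> {0..1}" if "t \<in> {0..1}" for t
    using that \<phi>(2) by (auto simp: g'_def simp del: atLeastAtMost_iff)
  show thesis
  proof (rule that[of g'])
    show "g' \<in> path_space X"
      unfolding g'_def by (intro restrict_in_path_space pathin_reparametrize[OF pc \<phi>(1,2)])
    show "g' t = g t" if "t \<in> {e..1-e}" for t
      using that e \<phi>(5)[OF that] join_join_paths_middle[of t \<alpha> g \<beta>] by (simp add: g'_def)
    show "g' ` {0..e} \<subseteq> \<alpha> ` {0..1} \<union> g ` {0..e}"
    proof (rule image_subsetI)
      fix t :: real
      assume t: "t \<in> {0..e}"
      with e g'_eq[of t] \<phi>(6)[OF t] show "g' t \<in> \<alpha> ` {0..1} \<union> g ` {0..e}"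
        using join_join_paths_image_initial[of e "\<phi> t" \<alpha> g \<beta>] by auto
    qed
    show "g' ` {1-e..1} \<subseteq> g ` {1-e..1} \<union> \<beta> ` {0..1}"
    proof (rule image_subsetI)
      fix t :: real
      assume t: "t \<in> {1-e..1}"
      with e g'_eq[of t] \<phi>(7)[OF t] show "g' t \<in> g ` {1-e..1} \<union> \<beta> ` {0..1}"
        using join_join_paths_image_final[of e "\<phi> t" \<alpha> g \<beta>] by auto
    qed
    show "path_homotopic X g' ?c"
      unfolding g'_def by (rule path_homotopic_reparametrize[OF pc \<phi>(1,2), where v=id]) (auto simp: \<phi>(3,4))
  qed
qed

lemma compact_open_nbhd_absorbs_end_paths:
  assumes g: "g \<in> path_space X" and N: "openin (compact_open_paths X) N" "g \<in> N"
  obtains A B where "openin X A" "g 0 \<in> A" "openin X B" "g 1 \<in> B"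
    "\<And>\<alpha> \<beta>. pathin X \<alpha> \<Longrightarrow> pathin X \<beta> \<Longrightarrow> \<alpha> ` {0..1} \<subseteq> A \<Longrightarrow> \<beta> ` {0..1} \<subseteq> B \<Longrightarrow>
        \<alpha> 1 = g 0 \<Longrightarrow> \<beta> 0 = g 1 \<Longrightarrow> \<exists>g'\<in>N. path_homotopic X g' (join_paths (join_paths \<alpha> g) \<beta>)"
proof -
  obtain A B e where AB: "openin X A" "openin X B" and e: "0 < e" "e < 1/4"
    and gA: "g ` {0..e} \<subseteq> A" and gB: "g ` {1-e..1} \<subseteq> B"
    and inN: "\<And>f. f \<in> path_space X \<Longrightarrow> f ` {0..e} \<subseteq> A \<Longrightarrow> f ` {1-e..1} \<subseteq> B \<Longrightarrow>
        (\<And>t. t \<in> {e..1-e} \<Longrightarrow> f t = g t) \<Longrightarrow> f \<in> N"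
    by (rule compact_open_paths_nbhd_endpoint_margins[OF g N]) blast
  show thesis
  proof (rule that[OF AB(1) _ AB(2)])
    show "g 0 \<in> A" "g 1 \<in> B"
      using gA gB e by auto
    fix \<alpha> \<beta>
    assume \<alpha>: "pathin X \<alpha>" "\<alpha> ` {0..1} \<subseteq> A" "\<alpha> 1 = g 0"
      and \<beta>: "pathin X \<beta>" "\<beta> ` {0..1} \<subseteq> B" "\<beta> 0 = g 1"
    obtain g' where g': "g' \<in> path_space X" "\<And>t. t \<in> {e..1-e} \<Longrightarrow> g' t = g t"
      "g' ` {0..e} \<subseteq> \<alpha> ` {0..1} \<union> g ` {0..e}" "g' ` {1-e..1} \<subseteq> g ` {1-e..1} \<union> \<beta> ` {0..1}"
      "path_homotopic X g' (join_paths (join_paths \<alpha> g) \<beta>)"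
      by (rule path_homotopic_absorb_end_paths[OF path_space_imp_pathin[OF g] e \<alpha>(1,3) \<beta>(1,3)]) blast
    have "g' ` {0..e} \<subseteq> A" "g' ` {1-e..1} \<subseteq> B"
      using g'(3) \<alpha>(2) gA g'(4) \<beta>(2) gB by (meson Un_least subset_trans)+
    then have "g' \<in> N"
      by (intro inN[OF g'(1)] g'(2))
    with g'(5) show "\<exists>g'\<in>N. path_homotopic X g' (join_paths (join_paths \<alpha> g) \<beta>)"
      by blast
  qed
qed

section \<open>Paths near a given path differ from it only by small end paths\<close>

lemma pathin_subdivision_subordinate:
  assumes h: "pathin X h" and cover: "\<And>x. x \<in> topspace X \<Longrightarrow> \<exists>U. openin X U \<and> x \<in> U \<and> P U"
  obtains n :: nat and W where "0 < n"
    "\<And>i. i < n \<Longrightarrow> openin X (W i) \<and> P (W i) \<and> h ` {real i / n..real (Suc i) / n} \<subseteq> W i"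
proof -
  define \<C> where "\<C> = {T. open T \<and> (\<exists>U. openin X U \<and> P U \<and> h ` ({0..1} \<inter> T) \<subseteq> U)}"
  have cover01: "{0..1} \<subseteq> \<Union>\<C>"
  proof
    fix s :: real
    assume s: "s \<in> {0..1}"
    obtain U where U: "openin X U" "h s \<in> U" "P U"
      using cover pathin_in_topspace[OF h s] by blast
    obtain T where "open T" "{r \<in> {0..1}. h r \<in> U} = {0..1} \<inter> T"
      using pathin_preimage_open[OF h U(1)] by blast
    with U s show "s \<in> \<Union>\<C>"
      unfolding \<C>_def by blast
  qed
  obtain \<delta> where \<delta>: "0 < \<delta>" "\<And>T. T \<subseteq> {0..1} \<Longrightarrow> diameter T < \<delta> \<Longrightarrow> \<exists>B\<in>\<C>. T \<subseteq> B"
  proof (rule Lebesgue_number_lemma[of "{0..1}" \<C>])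
    show "\<C> \<noteq> {}"
      using cover01 by auto
  qed (use cover01 in \<open>auto simp: \<C>_def\<close>)
  obtain n :: nat where n: "1 / \<delta> < n"
    using reals_Archimedean2 by blast
  then have "0 < n"
    using \<delta>(1) by (metis divide_pos_pos of_nat_0_less_iff order.strict_trans zero_less_one)
  have "\<forall>i\<in>{..<n}. \<exists>U. openin X U \<and> P U \<and> h ` {real i / n..real (Suc i) / n} \<subseteq> U"
  proof
    fix i
    assume "i \<in> {..<n}"
    let ?I = "{real i / n..real (Suc i) / n}"
    have "?I \<subseteq> {0..1}"
      using \<open>i \<in> {..<n}\<close> by (auto simp: field_split_simps)
    moreover have "diameter ?I < \<delta>"
      using \<delta>(1) n by (auto simp: field_split_simps)
    ultimately obtain T where "T \<in> \<C>" "?I \<subseteq> T"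
      using \<delta>(2) by blast
    then show "\<exists>U. openin X U \<and> P U \<and> h ` ?I \<subseteq> U"
      using \<open>?I \<subseteq> {0..1}\<close> unfolding \<C>_def by blast
  qed
  then obtain W where W: "\<forall>i\<in>{..<n}. openin X (W i) \<and> P (W i) \<and> h ` {real i / n..real (Suc i) / n} \<subseteq> W i"
    unfolding bchoice_iff by blast
  show thesis
    by (rule that[of n W]) (use \<open>0 < n\<close> W in auto)
qed

lemma relatively_inessential_subdivision:
  assumes lpc: "locally_path_connected_space X" and slsc: "semilocally_simply_connected X"
    and h: "pathin X h" and A: "openin X A" "h 0 \<in> A" and B: "openin X B" "h 1 \<in> B"
  obtains n W P where "0 < n"
    "\<And>i. i < n \<Longrightarrow> openin X (W i) \<and> relatively_inessential X (W i) \<and> h ` {real i / n..real (Suc i) / n} \<subseteq> W i"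
    "\<And>i. i \<le> n \<Longrightarrow> openin X (P i) \<and> path_connectedin X (P i) \<and> h (real i / n) \<in> P i"
    "\<And>i. i < n \<Longrightarrow> P i \<subseteq> W i \<and> P (Suc i) \<subseteq> W i" "P 0 \<subseteq> A" "P n \<subseteq> B"
proof -
  obtain n W where n: "0 < n"
    and W: "\<And>i. i < n \<Longrightarrow> openin X (W i) \<and> relatively_inessential X (W i) \<and> h ` {real i / n..real (Suc i) / n} \<subseteq> W i"
  proof (rule pathin_subdivision_subordinate[OF h, of "relatively_inessential X"])
    show "\<exists>U. openin X U \<and> x \<in> U \<and> relatively_inessential X U" if "x \<in> topspace X" for x
      by (rule semilocally_simply_connected_nbhd[OF slsc that]) blast
  qed blast
  have left: "h (real i / n) \<in> W i" and right: "h (real (Suc i) / n) \<in> W i" if "i < n" for i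
    using W[OF that] by (auto simp: divide_right_mono)
  define V where "V i = (if i = 0 then A else W (i - 1)) \<inter> (if i = n then B else W i)" for i
  have "openin X (V i) \<and> h (real i / n) \<in> V i" if "i \<le> n" for i
    using that n A B left[of i] right[of "i - 1"] W[of i] W[of "i - 1"] by (cases i) (auto simp: V_def)
  then have "\<forall>i\<in>{..n}. \<exists>U. openin X U \<and> path_connectedin X U \<and> h (real i / n) \<in> U \<and> U \<subseteq> V i"
    using lpc unfolding locally_path_connected_space by blast
  then obtain P where P: "\<forall>i\<in>{..n}. openin X (P i) \<and> path_connectedin X (P i) \<and> h (real i / n) \<in> P i \<and> P i \<subseteq> V i"
    unfolding bchoice_iff by blast
  have "P i \<subseteq> W i" "P (Suc i) \<subseteq> W i" if "i < n" for i
    using bspec[OF P, of i] bspec[OF P, of "Suc i"] that by (auto simp: V_def)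
  moreover have "P 0 \<subseteq> A" "P n \<subseteq> B"
    using bspec[OF P, of 0] bspec[OF P, of n] n by (auto simp: V_def)
  ultimately show thesis
    using n W P by (intro that[of n W P]) auto
qed

lemma path_homotopic_via_end_paths_along_chain:
  assumes h: "pathin X h" and h': "pathin X h'" and n: "0 < n" and t: "mono t" "t 0 = 0" "t n = 1"
    and W: "\<And>i. i < n \<Longrightarrow> relatively_inessential X (W i) \<and> h ` {t i..t (Suc i)} \<subseteq> W i
        \<and> h' ` {t i..t (Suc i)} \<subseteq> W i"
    and P: "\<And>i. i \<le> n \<Longrightarrow> path_connectedin X (P i) \<and> h (t i) \<in> P i \<and> h' (t i) \<in> P i"
    and PW: "\<And>i. i < n \<Longrightarrow> P i \<subseteq> W i \<and> P (Suc i) \<subseteq> W i"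
  obtains \<alpha> \<beta> where "pathin X \<alpha>" "pathin X \<beta>" "\<alpha> ` {0..1} \<subseteq> P 0" "\<beta> ` {0..1} \<subseteq> P n"
    "\<alpha> 1 = h 0" "\<beta> 0 = h 1" "path_homotopic X h' (join_paths (join_paths \<alpha> h) \<beta>)"
proof -
  have t01: "t i \<in> {0..1}" if "i \<le> n" for i
    using monoD[OF t(1), of 0 i] monoD[OF t(1), of i n] t(2,3) that by auto
  have "\<forall>i\<in>{..n}. \<exists>\<gamma>. pathin X \<gamma> \<and> \<gamma> ` {0..1} \<subseteq> P i \<and> \<gamma> 0 = h (t i) \<and> \<gamma> 1 = h' (t i)"
    using P unfolding path_connectedin by (auto simp: image_subset_iff Pi_iff)
  then obtain c where c: "\<forall>i\<in>{..n}. pathin X (c i) \<and> c i ` {0..1} \<subseteq> P i \<and> c i 0 = h (t i) \<and> c i 1 = h' (t i)"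
    unfolding bchoice_iff by blast
  have "path_homotopic X (join_paths (c 0) h') (join_paths h (c n))"
  proof (rule path_homotopic_ladder[OF h h' n t])
    show "pathin X (c i)" "c i 0 = h (t i)" "c i 1 = h' (t i)" if "i \<le> n" for i
      using c that by auto
    show "path_homotopic X (join_paths (c i) (sub_path (t i) (t (Suc i)) h'))
        (join_paths (sub_path (t i) (t (Suc i)) h) (c (Suc i)))" if "i < n" for i
    proof (rule path_homotopic_square_relatively_inessential[OF _ h h'])
      show "t i \<in> {0..1}" "t (Suc i) \<in> {0..1}" "t i \<le> t (Suc i)"
        using t01 that monoD[OF t(1)] by auto
      show "c i ` {0..1} \<subseteq> W i" "c (Suc i) ` {0..1} \<subseteq> W i"
        using c PW[OF that] that by fastforce+
    qed (use c W that in auto)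
  qed
  then have "path_homotopic X h' (join_paths (join_paths (reverse_path (c 0)) h) (c n))"
    by (rule path_homotopic_join_cancel_left[rotated -1]) (use c h h' t in auto)
  moreover have "reverse_path (c 0) ` {0..1} \<subseteq> P 0"
    using c by (auto intro!: reverse_path_image_subset)
  ultimately show thesis
    using c t by (intro that[of "reverse_path (c 0)" "c n"]) (auto intro: pathin_reverse_path)
qed

lemma compact_open_nbhd_homotopic_via_end_paths:
  assumes lpc: "locally_path_connected_space X" and slsc: "semilocally_simply_connected X"
    and h: "h \<in> path_space X" and A: "openin X A" "h 0 \<in> A" and B: "openin X B" "h 1 \<in> B"
  obtains M where "openin (compact_open_paths X) M" "h \<in> M"
    "\<And>h'. h' \<in> M \<Longrightarrow> \<exists>\<alpha> \<beta>. pathin X \<alpha> \<and> pathin X \<beta> \<and> \<alpha> ` {0..1} \<subseteq> A \<and> \<beta> ` {0..1} \<subseteq> B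
        \<and> \<alpha> 1 = h 0 \<and> \<beta> 0 = h 1 \<and> path_homotopic X h' (join_paths (join_paths \<alpha> h) \<beta>)"
proof -
  have ph: "pathin X h"
    using h by (rule path_space_imp_pathin)
  obtain n W P where n: "0 < n"
    and W: "\<And>i. i < n \<Longrightarrow> openin X (W i) \<and> relatively_inessential X (W i) \<and> h ` {real i / n..real (Suc i) / n} \<subseteq> W i"
    and P: "\<And>i. i \<le> n \<Longrightarrow> openin X (P i) \<and> path_connectedin X (P i) \<and> h (real i / n) \<in> P i"
    and PW: "\<And>i. i < n \<Longrightarrow> P i \<subseteq> W i \<and> P (Suc i) \<subseteq> W i" and PA: "P 0 \<subseteq> A" and PB: "P n \<subseteq> B"
    by (rule relatively_inessential_subdivision[OF lpc slsc ph A B]) blast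
  define t where "t i = real i / real n" for i
  have t: "mono t" "t 0 = 0" "t n = 1"
    using n by (auto simp: t_def mono_def divide_right_mono)
  have t01: "t i \<in> {0..1}" if "i \<le> n" for i
    using that n by (auto simp: t_def)
  define M where "M = ((\<Inter>i\<in>{..<n}. {f \<in> path_space X. f ` {t i..t (Suc i)} \<subseteq> W i}) \<inter> topspace (compact_open_paths X))
      \<inter> ((\<Inter>i\<in>{..n}. {f \<in> path_space X. f ` {t i} \<subseteq> P i}) \<inter> topspace (compact_open_paths X))"
  have "openin (compact_open_paths X) M"
    unfolding M_def using W P t01
    by (intro openin_Int openin_INT openin_compact_open_paths_subbasic) auto
  moreover have "h \<in> M"
    unfolding M_def using h W P by (auto simp: t_def)
  moreover have "\<exists>\<alpha> \<beta>. pathin X \<alpha> \<and> pathin X \<beta> \<and> \<alpha> ` {0..1} \<subseteq> A \<and> \<beta> ` {0..1} \<subseteq> B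
        \<and> \<alpha> 1 = h 0 \<and> \<beta> 0 = h 1 \<and> path_homotopic X h' (join_paths (join_paths \<alpha> h) \<beta>)"
    if "h' \<in> M" for h'
  proof -
    have h': "pathin X h'" "\<And>i. i < n \<Longrightarrow> h' ` {t i..t (Suc i)} \<subseteq> W i" "\<And>i. i \<le> n \<Longrightarrow> h' (t i) \<in> P i"
      using that path_space_imp_pathin unfolding M_def by auto
    obtain \<alpha> \<beta> where "pathin X \<alpha>" "pathin X \<beta>" "\<alpha> ` {0..1} \<subseteq> P 0" "\<beta> ` {0..1} \<subseteq> P n"
      "\<alpha> 1 = h 0" "\<beta> 0 = h 1" "path_homotopic X h' (join_paths (join_paths \<alpha> h) \<beta>)"
    proof (rule path_homotopic_via_end_paths_along_chain[OF ph h'(1) n t])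
      show "relatively_inessential X (W i) \<and> h ` {t i..t (Suc i)} \<subseteq> W i \<and> h' ` {t i..t (Suc i)} \<subseteq> W i"
        if "i < n" for i
        using W[OF that] h'(2)[OF that] by (simp add: t_def)
      show "path_connectedin X (P i) \<and> h (t i) \<in> P i \<and> h' (t i) \<in> P i" if "i \<le> n" for i
        using P[OF that] h'(3)[OF that] by (simp add: t_def)
    qed (use PW in blast)+
    with PA PB show ?thesis
      by blast
  qed
  ultimately show thesis
    by (rule that)
qed

lemma path_class_eq: "path_homotopic X g h \<Longrightarrow> path_class X g = path_class X h"
  unfolding path_class_def using path_homotopic_sym path_homotopic_trans by blast

lemma path_homotopic_if_path_class_eq:
  assumes "h \<in> path_space X" "path_class X h = path_class X g"
  shows "path_homotopic X g h"
proof -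
  have "h \<in> path_class X h"
    using assms(1) path_homotopic_refl[OF path_space_imp_pathin] by (simp add: path_class_def)
  then have "h \<in> path_class X g"
    using assms(2) by simp
  then show ?thesis
    by (simp add: path_class_def)
qed

lemma path_class_saturation_nbhd:
  assumes lpc: "locally_path_connected_space X" and slsc: "semilocally_simply_connected X"
    and U: "openin (compact_open_paths X) U" "g \<in> U"
    and h: "h \<in> path_space X" and gh: "path_homotopic X g h"
  obtains M where "openin (compact_open_paths X) M" "h \<in> M"
    "M \<subseteq> {h \<in> path_space X. path_class X h \<in> path_class X ` U}"
proof -
  have ends: "h 0 = g 0" "h 1 = g 1"
    using path_homotopic_endpoints[OF gh] by simp_all
  have "g \<in> path_space X"
    using openin_subset[OF U(1)] U(2) by auto
  then obtain A B where A: "openin X A" "g 0 \<in> A" and B: "openin X B" "g 1 \<in> B"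
    and absorb: "\<And>\<alpha> \<beta>. pathin X \<alpha> \<Longrightarrow> pathin X \<beta> \<Longrightarrow> \<alpha> ` {0..1} \<subseteq> A \<Longrightarrow> \<beta> ` {0..1} \<subseteq> B \<Longrightarrow>
        \<alpha> 1 = g 0 \<Longrightarrow> \<beta> 0 = g 1 \<Longrightarrow> \<exists>g'\<in>U. path_homotopic X g' (join_paths (join_paths \<alpha> g) \<beta>)"
    by (rule compact_open_nbhd_absorbs_end_paths[OF _ U]) blast
  obtain M where M: "openin (compact_open_paths X) M" "h \<in> M"
    and conj: "\<And>h'. h' \<in> M \<Longrightarrow> \<exists>\<alpha> \<beta>. pathin X \<alpha> \<and> pathin X \<beta> \<and> \<alpha> ` {0..1} \<subseteq> A \<and> \<beta> ` {0..1} \<subseteq> B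
        \<and> \<alpha> 1 = h 0 \<and> \<beta> 0 = h 1 \<and> path_homotopic X h' (join_paths (join_paths \<alpha> h) \<beta>)"
  proof (rule compact_open_nbhd_homotopic_via_end_paths[OF lpc slsc h A(1) _ B(1)])
    show "h 0 \<in> A" "h 1 \<in> B"
      using A(2) B(2) ends by simp_all
  qed blast
  have "path_class X h' \<in> path_class X ` U" if h'M: "h' \<in> M" for h'
  proof -
    obtain \<alpha> \<beta> where \<alpha>: "pathin X \<alpha>" "\<alpha> ` {0..1} \<subseteq> A" "\<alpha> 1 = h 0"
      and \<beta>: "pathin X \<beta>" "\<beta> ` {0..1} \<subseteq> B" "\<beta> 0 = h 1"
      and h': "path_homotopic X h' (join_paths (join_paths \<alpha> h) \<beta>)"
      using conj[OF h'M] by blast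
    obtain g' where "g' \<in> U" and g': "path_homotopic X g' (join_paths (join_paths \<alpha> g) \<beta>)"
      using absorb[OF \<alpha>(1) \<beta>(1) \<alpha>(2) \<beta>(2)] \<alpha>(3) \<beta>(3) ends by auto
    have "path_homotopic X (join_paths (join_paths \<alpha> h) \<beta>) (join_paths (join_paths \<alpha> g) \<beta>)"
      by (rule path_homotopic_join[OF path_homotopic_join[OF path_homotopic_refl[OF \<alpha>(1)]
            path_homotopic_sym[OF gh]] path_homotopic_refl[OF \<beta>(1)]]) (use \<alpha>(3) \<beta>(3) in simp_all)
    with h' g' have "path_class X h' = path_class X g'"
      by (metis path_class_eq path_homotopic_sym path_homotopic_trans)
    with \<open>g' \<in> U\<close> show ?thesis
      by blast
  qed
  moreover have "M \<subseteq> path_space X"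
    using openin_subset[OF M(1)] by simp
  ultimately show thesis
    using M by (intro that) auto
qed

lemma openin_path_class_saturation:
  assumes lpc: "locally_path_connected_space X" and slsc: "semilocally_simply_connected X"
    and U: "openin (compact_open_paths X) U"
  shows "openin (compact_open_paths X) {h \<in> path_space X. path_class X h \<in> path_class X ` U}"
proof (subst openin_subopen, intro ballI)
  fix h
  assume "h \<in> {h \<in> path_space X. path_class X h \<in> path_class X ` U}"
  then obtain g where h: "h \<in> path_space X" and g: "g \<in> U" and gh: "path_homotopic X g h"
    using path_homotopic_if_path_class_eq by blast
  obtain M where "openin (compact_open_paths X) M" "h \<in> M"
    "M \<subseteq> {h \<in> path_space X. path_class X h \<in> path_class X ` U}"
    by (rule path_class_saturation_nbhd[OF lpc slsc U g h gh]) blast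
  then show "\<exists>T. openin (compact_open_paths X) T \<and> h \<in> T
      \<and> T \<subseteq> {h \<in> path_space X. path_class X h \<in> path_class X ` U}"
    by blast
qed

lemma openin_quotient_topology:
  "openin (quotient_topology P f) S \<longleftrightarrow> S \<subseteq> f ` topspace P \<and> openin P {x \<in> topspace P. f x \<in> S}"
  unfolding quotient_topology_def by (simp add: istopology_quotient)

lemma open_map_quotient_topology:
  assumes "\<And>U. openin P U \<Longrightarrow> openin P {x \<in> topspace P. f x \<in> f ` U}"
  shows "open_map P (quotient_topology P f) f"
  unfolding open_map_def openin_quotient_topology
  using assms openin_subset by fastforce

theorem corollary2p5:
  fixes X :: "'a topology"
  assumes "locally_path_connected_space X"
    and "semilocally_simply_connected X"
  shows "open_map (compact_open_paths X) (CO'_topology X) (path_class X)"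
  unfolding CO'_topology_def
  by (rule open_map_quotient_topology) (simp add: openin_path_class_saturation[OF assms])

end
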